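(* The set $\mathcal{B}_{2,3,4}$ consisting of the identities (M1) $(xy)(zt)=(xz)(yt)$, (M2) $(xy)(zt)=(ty)(zx)$, (M3) $((xy)z)t=((xt)z)y$, (M4) $(x(yz))t=(x(tz))y$, (M5) $x((yz)t)=z((yx)t)$, (M6) $x(y(zt))=z(y(xt))$, and $(xy^2)y^2=x$ is a basis for $\Sigma_{2,3,4}$.
   Context: $y^2$ denotes $yy$. $\Sigma_{2,3,4}$ is the set of groupoid identities satisfied in the integers $\mathbb{Z}$ by each of the binary operations $x-y$, $-x+y$ and $-x-y$. A basis is a set of identities whose equational consequences are exactly $\Sigma_{2,3,4}$. *)

theory Defs
  imports Main
begin

datatype gterm = Var nat | App gterm gterm

fun eval :: "(int \<Rightarrow> int \<Rightarrow> int) \<Rightarrow> (nat \<Rightarrow> int) \<Rightarrow> gterm \<Rightarrow> int" where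
  "eval f \<rho> (Var n) = \<rho> n"
| "eval f \<rho> (App s t) = f (eval f \<rho> s) (eval f \<rho> t)"

fun subst :: "(nat \<Rightarrow> gterm) \<Rightarrow> gterm \<Rightarrow> gterm" where
  "subst \<sigma> (Var n) = \<sigma> n"
| "subst \<sigma> (App s t) = App (subst \<sigma> s) (subst \<sigma> t)"

definition satisfies :: "(int \<Rightarrow> int \<Rightarrow> int) \<Rightarrow> gterm \<times> gterm \<Rightarrow> bool" where
  "satisfies f e \<longleftrightarrow> (\<forall>\<rho>. eval f \<rho> (fst e) = eval f \<rho> (snd e))"

definition Sigma234 :: "(gterm \<times> gterm) set" where
  "Sigma234 = {e. satisfies (\<lambda>a b. a - b) e \<and> satisfies (\<lambda>a b. - a + b) e
                 \<and> satisfies (\<lambda>a b. - a - b) e}"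

inductive derivable :: "(gterm \<times> gterm) set \<Rightarrow> gterm \<Rightarrow> gterm \<Rightarrow> bool" for E where
  ax: "(s, t) \<in> E \<Longrightarrow> derivable E s t"
| refl: "derivable E s s"
| sym: "derivable E s t \<Longrightarrow> derivable E t s"
| trans: "derivable E s t \<Longrightarrow> derivable E t u \<Longrightarrow> derivable E s u"
| inst: "derivable E s t \<Longrightarrow> derivable E (subst \<sigma> s) (subst \<sigma> t)"
| cong: "derivable E s1 t1 \<Longrightarrow> derivable E s2 t2 \<Longrightarrow> derivable E (App s1 s2) (App t1 t2)"

definition consequences :: "(gterm \<times> gterm) set \<Rightarrow> (gterm \<times> gterm) set" where
  "consequences E = {(s, t). derivable E s t}"

definition is_basis_of :: "(gterm \<times> gterm) set \<Rightarrow> (gterm \<times> gterm) set \<Rightarrow> bool" where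
  "is_basis_of E \<Sigma> \<longleftrightarrow> consequences E = \<Sigma>"

abbreviation vx where "vx \<equiv> Var 0"
abbreviation vy where "vy \<equiv> Var 1"
abbreviation vz where "vz \<equiv> Var 2"
abbreviation vt where "vt \<equiv> Var 3"

definition B234 :: "(gterm \<times> gterm) set" where
  "B234 = {
    (App (App vx vy) (App vz vt), App (App vx vz) (App vy vt)),
    (App (App vx vy) (App vz vt), App (App vt vy) (App vz vx)),
    (App (App (App vx vy) vz) vt, App (App (App vx vt) vz) vy),
    (App (App vx (App vy vz)) vt, App (App vx (App vt vz)) vy),
    (App vx (App (App vy vz) vt), App vz (App (App vy vx) vt)),
    (App vx (App vy (App vz vt)), App vz (App vy (App vx vt))),
    (App (App vx (App vy vy)) (App vy vy), vx)}"

end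

theory Submission
  imports Defs
begin

text \<open>
  Soundness is a direct check in the three models. For completeness we work in the free algebra
  of the variety defined by \<open>B234\<close>: the medial and paramedial laws together with
  \<open>(x y\<^sup>2) y\<^sup>2 = x\<close> make \<open>p(x,y,z) = (x y\<^sup>2)(y z)\<close> a Mal'cev term
  commuting with the operation, so the free algebra is an abelian group in which
  \<open>x y = \<alpha> x + \<beta> y + \<gamma>\<close> for commuting involutive endomorphisms \<open>\<alpha>, \<beta>\<close> with
  \<open>1 + \<alpha> + \<beta> + \<alpha>\<beta> = 0\<close>. A term is therefore determined by how many leaves of each variable,
  and how many inner nodes, lie in each coset of the Klein four-group \<open>{1, \<alpha>, \<beta>, \<alpha>\<beta>}\<close>,
  up to adding the same number to all four counts. Such count vectors are separated exactly
  by the three nontrivial characters of the Klein group, and these are the operations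
  \<open>x - y\<close>, \<open>-x + y\<close> and \<open>-x - y\<close>.
\<close>

lemma eval_subst: "eval f \<rho> (subst \<sigma> s) = eval f (\<lambda>n. eval f \<rho> (\<sigma> n)) s"
  by (induction s) auto

lemma derivable_imp_satisfies:
  assumes "derivable E s t" and "\<And>e. e \<in> E \<Longrightarrow> satisfies f e"
  shows "satisfies f (s, t)"
  using assms(1) unfolding satisfies_def
proof (induction)
  case (ax s t)
  then show ?case using assms(2) by (fastforce simp: satisfies_def)
next
  case (inst s t \<sigma>)
  then show ?case by (simp add: eval_subst)
qed auto

lemma B234_subset_Sigma234: "B234 \<subseteq> Sigma234"
  by (auto simp: B234_def Sigma234_def satisfies_def algebra_simps)

lemma derivable_imp_Sigma234: "derivable B234 s t \<Longrightarrow> (s, t) \<in> Sigma234"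
  using derivable_imp_satisfies B234_subset_Sigma234 by (fastforce simp: Sigma234_def)

quotient_type free = gterm / "derivable B234"
  by (rule equivpI) (auto simp: reflp_def symp_def transp_def intro: derivable.intros)

lift_definition fapp :: "free \<Rightarrow> free \<Rightarrow> free" is App by (rule derivable.cong)
lift_definition fvar :: "nat \<Rightarrow> free" is Var .

lemma abs_free_App: "abs_free (App s t) = fapp (abs_free s) (abs_free t)"
  by (simp add: fapp.abs_eq)

lemma derivable_B234_instance:
  "(l, r) \<in> B234 \<Longrightarrow> derivable B234 (subst \<sigma> l) (subst \<sigma> r)"
  by (intro derivable.inst derivable.ax)

lemma medial: "fapp (fapp x y) (fapp z t) = fapp (fapp x z) (fapp y t)"
proof transfer
  fix x y z t
  show "derivable B234 (App (App x y) (App z t)) (App (App x z) (App y t))"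
    using derivable_B234_instance[of "App (App vx vy) (App vz vt)" "App (App vx vz) (App vy vt)"
        "nth [x, y, z, t]"]
    by (simp add: B234_def)
qed

lemma paramedial: "fapp (fapp x y) (fapp z t) = fapp (fapp t y) (fapp z x)"
proof transfer
  fix x y z t
  show "derivable B234 (App (App x y) (App z t)) (App (App t y) (App z x))"
    using derivable_B234_instance[of "App (App vx vy) (App vz vt)" "App (App vt vy) (App vz vx)"
        "nth [x, y, z, t]"]
    by (simp add: B234_def)
qed

lemma fapp_sq_sq: "fapp (fapp x (fapp y y)) (fapp y y) = x"
proof transfer
  fix x y
  show "derivable B234 (App (App x (App y y)) (App y y)) x"
    using derivable_B234_instance[of "App (App vx (App vy vy)) (App vy vy)" vx "nth [x, y]"]
    by (simp add: B234_def)
qed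

definition malcev :: "free \<Rightarrow> free \<Rightarrow> free \<Rightarrow> free" where
  "malcev x y z = fapp (fapp x (fapp y y)) (fapp y z)"

lemma malcev_left: "malcev x y y = x"
  by (simp add: malcev_def fapp_sq_sq)

lemma malcev_right: "malcev y y z = z"
  unfolding malcev_def by (simp add: paramedial[of y "fapp y y" y z] fapp_sq_sq)

lemma fapp_malcev: "fapp (malcev a b c) (malcev d e f) = malcev (fapp a d) (fapp b e) (fapp c f)"
proof -
  have "fapp (malcev a b c) (malcev d e f)
      = fapp (fapp (fapp a (fapp b b)) (fapp d (fapp e e))) (fapp (fapp b c) (fapp e f))"
    unfolding malcev_def by (rule medial)
  also have "\<dots> = fapp (fapp (fapp a d) (fapp (fapp b b) (fapp e e))) (fapp (fapp b e) (fapp c f))"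
    by (simp only: medial[of a] medial[of b c])
  also have "\<dots> = malcev (fapp a d) (fapp b e) (fapp c f)"
    unfolding malcev_def by (simp only: medial[of b b])
  finally show ?thesis .
qed

lemma malcev_interchange:
  "malcev (malcev a b c) (malcev d e f) (malcev g h i) = malcev (malcev a d g) (malcev b e h) (malcev c f i)"
  by (simp only: malcev_def[of "malcev a b c"] fapp_malcev) (simp only: malcev_def)

text \<open>A Mal'cev operation that commutes with itself is \<open>x - y + z\<close> for an abelian group
  structure whose zero can be any element.\<close>

instantiation free :: ab_group_add
begin

definition zero_free_def: "0 = fvar 0"
definition plus_free_def: "x + y = malcev x 0 y"
definition uminus_free_def: "- x = malcev 0 x 0"
definition minus_free_def: "x - y = x + - (y :: free)"

instance proof
  fix a b c :: free
  have "malcev (malcev a 0 b) 0 c = malcev (malcev a 0 b) (malcev 0 0 0) (malcev 0 0 c)"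
    by (simp add: malcev_left malcev_right)
  also have "\<dots> = malcev (malcev a 0 0) (malcev 0 0 0) (malcev b 0 c)"
    by (rule malcev_interchange)
  also have "\<dots> = malcev a 0 (malcev b 0 c)"
    by (simp add: malcev_left malcev_right)
  finally show "a + b + c = a + (b + c)" by (simp add: plus_free_def)
  have "malcev a 0 b = malcev (malcev 0 0 a) (malcev 0 0 0) (malcev b 0 0)"
    by (simp add: malcev_left malcev_right)
  also have "\<dots> = malcev (malcev 0 0 b) (malcev 0 0 0) (malcev a 0 0)"
    by (rule malcev_interchange)
  also have "\<dots> = malcev b 0 a"
    by (simp add: malcev_left malcev_right)
  finally show "a + b = b + a" by (simp add: plus_free_def)
  show "0 + a = a" by (simp add: plus_free_def malcev_right)
  have "malcev (malcev 0 a 0) 0 a = malcev (malcev 0 a 0) (malcev 0 0 0) (malcev a 0 0)"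
    by (simp add: malcev_left malcev_right)
  also have "\<dots> = malcev (malcev 0 0 a) (malcev a 0 0) (malcev 0 0 0)"
    by (rule malcev_interchange)
  also have "\<dots> = 0"
    by (simp add: malcev_left malcev_right)
  finally show "- a + a = 0" by (simp add: plus_free_def uminus_free_def)
  show "a - b = a + - b" by (rule minus_free_def)
qed

end

lemma malcev_zero: "malcev x y 0 = x - y"
proof -
  have "malcev x y 0 = malcev (malcev x y 0) (malcev 0 y y) (malcev 0 0 0)"
    by (simp add: malcev_left malcev_right)
  also have "\<dots> = malcev (malcev x 0 0) (malcev y y 0) (malcev 0 y 0)"
    by (rule malcev_interchange)
  also have "\<dots> = x - y"
    by (simp add: malcev_left malcev_right plus_free_def uminus_free_def minus_free_def)
  finally show ?thesis .
qed

lemma malcev_eq: "malcev x y z = x - y + z"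
proof -
  have "malcev x y z = malcev (malcev x 0 0) (malcev y 0 0) (malcev 0 0 z)"
    by (simp add: malcev_left malcev_right)
  also have "\<dots> = malcev (malcev x y 0) (malcev 0 0 0) (malcev 0 0 z)"
    by (rule malcev_interchange)
  also have "\<dots> = x - y + z"
    by (simp add: malcev_left malcev_right malcev_zero plus_free_def)
  finally show ?thesis .
qed

definition \<gamma> :: free where "\<gamma> = fapp 0 0"
definition \<alpha> :: "free \<Rightarrow> free" where "\<alpha> u = fapp u 0 - \<gamma>"
definition \<beta> :: "free \<Rightarrow> free" where "\<beta> v = fapp 0 v - \<gamma>"

lemma fapp_affine: "fapp u v = \<alpha> u + \<beta> v + \<gamma>"
proof -
  have "fapp u v = fapp (malcev u 0 0) (malcev 0 0 v)" by (simp add: malcev_left malcev_right)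
  also have "\<dots> = malcev (fapp u 0) (fapp 0 0) (fapp 0 v)" by (rule fapp_malcev)
  finally show ?thesis by (simp add: malcev_eq \<alpha>_def \<beta>_def \<gamma>_def algebra_simps)
qed

lemma \<alpha>_add: "\<alpha> (x + y) = \<alpha> x + \<alpha> y"
proof -
  have "fapp (x + y) 0 = fapp (malcev x 0 y) (malcev 0 0 0)" by (simp add: malcev_left plus_free_def)
  also have "\<dots> = malcev (fapp x 0) (fapp 0 0) (fapp y 0)" by (rule fapp_malcev)
  finally show ?thesis by (simp add: malcev_eq \<alpha>_def \<gamma>_def algebra_simps)
qed

lemma \<beta>_add: "\<beta> (x + y) = \<beta> x + \<beta> y"
proof -
  have "fapp 0 (x + y) = fapp (malcev 0 0 0) (malcev x 0 y)" by (simp add: malcev_left plus_free_def)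
  also have "\<dots> = malcev (fapp 0 x) (fapp 0 0) (fapp 0 y)" by (rule fapp_malcev)
  finally show ?thesis by (simp add: malcev_eq \<beta>_def \<gamma>_def algebra_simps)
qed

lemma \<alpha>_zero [simp]: "\<alpha> 0 = 0" by (simp add: \<alpha>_def \<gamma>_def)
lemma \<beta>_zero [simp]: "\<beta> 0 = 0" by (simp add: \<beta>_def \<gamma>_def)

lemma orbit_sum_\<gamma>: "\<alpha> (\<beta> \<gamma>) + \<alpha> \<gamma> + \<beta> \<gamma> + \<gamma> = 0"
  using fapp_sq_sq[of 0 0] unfolding \<gamma>_def[symmetric] by (simp add: fapp_affine \<alpha>_add add.assoc)

lemma \<alpha>_\<alpha>: "\<alpha> (\<alpha> x) = x"
proof -
  have "fapp (fapp x \<gamma>) \<gamma> = x" using fapp_sq_sq[of x 0] unfolding \<gamma>_def[symmetric] .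
  then show ?thesis using orbit_sum_\<gamma> by (simp add: fapp_affine \<alpha>_add add.assoc)
qed

lemma \<alpha>_\<beta>_commute: "\<beta> (\<alpha> x) = \<alpha> (\<beta> x)"
  using medial[of 0 x 0 0] unfolding \<gamma>_def[symmetric]
  by (simp add: fapp_affine \<alpha>_add \<beta>_add algebra_simps)

lemma \<beta>_\<beta>: "\<beta> (\<beta> x) = x"
proof -
  have "fapp \<gamma> (fapp \<gamma> x) = fapp (fapp 0 \<gamma>) (fapp 0 x)" unfolding \<gamma>_def by (rule medial)
  also have "\<dots> = fapp (fapp x \<gamma>) (fapp 0 0)" by (rule paramedial)
  also have "\<dots> = x" using fapp_sq_sq[of x 0] unfolding \<gamma>_def[symmetric] .
  finally have "\<beta> (\<beta> x) + (\<alpha> (\<beta> \<gamma>) + \<alpha> \<gamma> + \<beta> \<gamma> + \<gamma>) = x"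
    by (simp add: fapp_affine \<alpha>_add \<beta>_add \<alpha>_\<beta>_commute algebra_simps)
  then show ?thesis using orbit_sum_\<gamma> by simp
qed

lemma orbit_sum_zero: "y + \<alpha> y + \<beta> y + \<alpha> (\<beta> y) = 0"
proof -
  have "fapp (fapp 0 (fapp y y)) (fapp y y) = 0" by (rule fapp_sq_sq)
  then have "(y + \<alpha> y + \<beta> y + \<alpha> (\<beta> y)) + (\<alpha> (\<beta> \<gamma>) + \<alpha> \<gamma> + \<beta> \<gamma> + \<gamma>) = 0"
    by (simp add: fapp_affine \<alpha>_add \<beta>_add \<alpha>_\<beta>_commute \<alpha>_\<alpha> \<beta>_\<beta> algebra_simps)
  then show ?thesis using orbit_sum_\<gamma> by simp
qed

text \<open>A class \<open>(p, r)\<close> stands for \<open>\<alpha>\<^sup>p \<beta>\<^sup>r\<close> in the Klein four-group.\<close>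

type_synonym cls = "bool \<times> bool"

lemma sum_UNIV_cls: "(\<Sum>k\<in>UNIV. f k) = f (False, False) + f (False, True) + f (True, False) + f (True, True)"
proof -
  have UNIV_eq: "(UNIV :: cls set) = {(False, False), (False, True), (True, False), (True, True)}"
    by (auto simp: UNIV_bool)
  show ?thesis unfolding UNIV_eq by (simp add: add.assoc)
qed

primrec nmul :: "nat \<Rightarrow> free \<Rightarrow> free" where
  "nmul 0 y = 0"
| "nmul (Suc n) y = y + nmul n y"

lemma nmul_add: "nmul (m + n) y = nmul m y + nmul n y"
  by (induction m) (simp_all add: add.assoc)

lemma nmul_zero: "nmul n 0 = 0"
  by (induction n) simp_all

lemma \<alpha>_nmul: "\<alpha> (nmul n y) = nmul n (\<alpha> y)"
  by (induction n) (simp_all add: \<alpha>_add)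

lemma \<beta>_nmul: "\<beta> (nmul n y) = nmul n (\<beta> y)"
  by (induction n) (simp_all add: \<beta>_add)

lemma nmul_plus: "nmul n (y + z) = nmul n y + nmul n z"
  by (induction n) (simp_all add: algebra_simps)

definition act :: "cls \<Rightarrow> free \<Rightarrow> free" where
  "act k y = (if fst k then \<alpha> else id) ((if snd k then \<beta> else id) y)"

definition orbit_comb :: "(cls \<Rightarrow> nat) \<Rightarrow> free \<Rightarrow> free" where
  "orbit_comb A y = (\<Sum>k\<in>UNIV. nmul (A k) (act k y))"

lemma orbit_comb_fapp:
  "\<alpha> (orbit_comb A y) + \<beta> (orbit_comb B y) = orbit_comb (\<lambda>(p, r). A (\<not> p, r) + B (p, \<not> r)) y"
  by (simp add: orbit_comb_def sum_UNIV_cls act_def \<alpha>_add \<beta>_add \<alpha>_nmul \<beta>_nmul \<alpha>_\<alpha> \<beta>_\<beta>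
      \<alpha>_\<beta>_commute nmul_add algebra_simps)

lemma orbit_comb_add: "orbit_comb (\<lambda>k. A k + B k) y = orbit_comb A y + orbit_comb B y"
  by (simp add: orbit_comb_def nmul_add sum.distrib)

lemma orbit_comb_unit: "orbit_comb (\<lambda>k. of_bool (k = (False, False))) y = y"
  by (simp add: orbit_comb_def sum_UNIV_cls act_def)

lemma orbit_comb_zero: "orbit_comb (\<lambda>k. 0) y = 0"
  by (simp add: orbit_comb_def)

lemma orbit_comb_shift: "orbit_comb (\<lambda>k. A k + n) y = orbit_comb A y"
proof -
  have "orbit_comb (\<lambda>k. n) y = nmul n (y + \<alpha> y + \<beta> y + \<alpha> (\<beta> y))"
    by (simp add: orbit_comb_def sum_UNIV_cls act_def nmul_plus algebra_simps)
  then show ?thesis by (simp add: orbit_comb_add orbit_sum_zero nmul_zero)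
qed

text \<open>\<open>occ t x (p, r)\<close> counts the leaves \<open>x\<close> of \<open>t\<close> reached from the root by a path whose
  numbers of left and right steps have parities \<open>p\<close> and \<open>r\<close>; \<open>inner t\<close> counts inner nodes
  in the same way.\<close>

fun occ :: "gterm \<Rightarrow> nat \<Rightarrow> cls \<Rightarrow> nat" where
  "occ (Var n) x k = of_bool (n = x \<and> k = (False, False))"
| "occ (App u v) x (p, r) = occ u x (\<not> p, r) + occ v x (p, \<not> r)"

fun inner :: "gterm \<Rightarrow> cls \<Rightarrow> nat" where
  "inner (Var n) k = 0"
| "inner (App u v) (p, r) = of_bool ((p, r) = (False, False)) + (inner u (\<not> p, r) + inner v (p, \<not> r))"

fun vars :: "gterm \<Rightarrow> nat set" where
  "vars (Var n) = {n}"
| "vars (App u v) = vars u \<union> vars v"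

lemma finite_vars: "finite (vars t)"
  by (induction t) auto

lemma \<alpha>_sum: "finite V \<Longrightarrow> \<alpha> (sum f V) = (\<Sum>x\<in>V. \<alpha> (f x))"
  by (induction rule: finite_induct) (simp_all add: \<alpha>_add)

lemma \<beta>_sum: "finite V \<Longrightarrow> \<beta> (sum f V) = (\<Sum>x\<in>V. \<beta> (f x))"
  by (induction rule: finite_induct) (simp_all add: \<beta>_add)

lemma abs_free_orbit_combs:
  assumes "finite V" and "vars t \<subseteq> V"
  shows "abs_free t = (\<Sum>x\<in>V. orbit_comb (occ t x) (fvar x)) + orbit_comb (inner t) \<gamma>"
  using assms(2)
proof (induction t)
  case (Var n)
  have occ_Var: "occ (Var n) x = (\<lambda>k. of_bool (x = n \<and> k = (False, False)))" for x
    by auto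
  have "orbit_comb (occ (Var n) x) (fvar x) = (if x = n then fvar n else 0)" for x
    by (cases "x = n") (simp_all add: occ_Var orbit_comb_unit orbit_comb_zero)
  then have "(\<Sum>x\<in>V. orbit_comb (occ (Var n) x) (fvar x)) = fvar n"
    using Var assms(1) by (simp del: occ.simps)
  moreover have "inner (Var n) = (\<lambda>k. 0)" by auto
  ultimately show ?case by (simp del: occ.simps add: orbit_comb_zero fvar.abs_eq)
next
  case (App u v)
  have occ_App: "occ (App u v) x = (\<lambda>(p, r). occ u x (\<not> p, r) + occ v x (p, \<not> r))" for x
    by auto
  have inner_App: "inner (App u v)
      = (\<lambda>k. of_bool (k = (False, False)) + (\<lambda>(p, r). inner u (\<not> p, r) + inner v (p, \<not> r)) k)"
    by auto
  have "abs_free (App u v) = \<alpha> (abs_free u) + \<beta> (abs_free v) + \<gamma>"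
    by (simp add: abs_free_App fapp_affine)
  also have "\<dots> = (\<Sum>x\<in>V. orbit_comb (occ (App u v) x) (fvar x)) + orbit_comb (inner (App u v)) \<gamma>"
    using App assms(1)
    by (simp add: \<alpha>_add \<beta>_add \<alpha>_sum \<beta>_sum occ_App inner_App orbit_comb_add orbit_comb_unit
        orbit_comb_fapp[symmetric] sum.distrib algebra_simps)
  finally show ?case .
qed

text \<open>The characters \<open>chi j\<close> of the Klein four-group; \<open>op_of j\<close> is the operation
  \<open>x y = chi j \<alpha> x + chi j \<beta> y\<close>, and the nontrivial characters give the three operations
  defining \<open>Sigma234\<close>.\<close>

definition chi :: "cls \<Rightarrow> cls \<Rightarrow> int" where
  "chi j k = (if fst j \<and> fst k then -1 else 1) * (if snd j \<and> snd k then -1 else 1)"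

definition op_of :: "cls \<Rightarrow> int \<Rightarrow> int \<Rightarrow> int" where
  "op_of j a b = chi j (True, False) * a + chi j (False, True) * b"

definition char_sum :: "cls \<Rightarrow> (cls \<Rightarrow> nat) \<Rightarrow> int" where
  "char_sum j A = (\<Sum>k\<in>UNIV. chi j k * int (A k))"

lemma Sigma234_eq: "Sigma234 = {e. \<forall>j. j \<noteq> (False, False) \<longrightarrow> satisfies (op_of j) e}"
proof -
  have "op_of (False, True) = (\<lambda>a b. a - b)" "op_of (True, False) = (\<lambda>a b. - a + b)"
    "op_of (True, True) = (\<lambda>a b. - a - b)"
    by (auto simp: fun_eq_iff op_of_def chi_def)
  then show ?thesis by (simp add: Sigma234_def all_bool_eq conj_ac)
qed

lemma char_sum_shift:
  "char_sum j (\<lambda>(p, r). A (\<not> p, r) + B (p, \<not> r))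
    = chi j (True, False) * char_sum j A + chi j (False, True) * char_sum j B"
proof -
  obtain a b where j: "j = (a, b)" by fastforce
  show ?thesis unfolding j by (cases a; cases b) (simp_all add: char_sum_def sum_UNIV_cls chi_def)
qed

lemma eval_op_of_indicator: "eval (op_of j) (\<lambda>n. of_bool (n = x)) t = char_sum j (occ t x)"
proof (induction t)
  case (Var n)
  show ?case by (cases j) (simp add: char_sum_def sum_UNIV_cls chi_def)
next
  case (App u v)
  have "occ (App u v) x = (\<lambda>(p, r). occ u x (\<not> p, r) + occ v x (p, \<not> r))"
    by auto
  then show ?case using App by (simp add: op_of_def char_sum_shift)
qed

lemma char_sum_unit_plus: "char_sum j (\<lambda>k. of_bool (k = (False, False)) + A k) = 1 + char_sum j A"
  by (simp add: char_sum_def sum_UNIV_cls chi_def algebra_simps)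

lemma eval_op_of_one:
  "eval (op_of j) (\<lambda>_. 1) t = 1 + (chi j (True, False) + chi j (False, True) - 1) * char_sum j (inner t)"
proof (induction t)
  case (Var n)
  have "inner (Var n) = (\<lambda>k. 0)" by auto
  then show ?case by (simp add: char_sum_def)
next
  case (App u v)
  let ?a = "chi j (True, False)" and ?b = "chi j (False, True)"
  have inner_App: "inner (App u v)
      = (\<lambda>k. of_bool (k = (False, False)) + (\<lambda>(p, r). inner u (\<not> p, r) + inner v (p, \<not> r)) k)"
    by auto
  have "eval (op_of j) (\<lambda>_. 1) (App u v) = ?a * eval (op_of j) (\<lambda>_. 1) u + ?b * eval (op_of j) (\<lambda>_. 1) v"
    by (simp add: op_of_def)
  also have "\<dots> = ?a * (1 + (?a + ?b - 1) * char_sum j (inner u)) + ?b * (1 + (?a + ?b - 1) * char_sum j (inner v))"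
    using App.IH by simp
  also have "\<dots> = 1 + (?a + ?b - 1) * (1 + ?a * char_sum j (inner u) + ?b * char_sum j (inner v))"
    by (simp add: algebra_simps)
  also have "\<dots> = 1 + (?a + ?b - 1) * char_sum j (inner (App u v))"
    unfolding inner_App char_sum_unit_plus char_sum_shift by simp
  finally show ?case .
qed

lemma char_sums_eq_imp_diff_const:
  assumes "\<And>j. j \<noteq> (False, False) \<Longrightarrow> char_sum j A = char_sum j B"
  shows "int (A k) = int (B k) + (int (A (False, False)) - int (B (False, False)))"
proof -
  have "char_sum (False, True) A = char_sum (False, True) B"
    "char_sum (True, False) A = char_sum (True, False) B"
    "char_sum (True, True) A = char_sum (True, True) B"
    using assms by auto
  then have eqs:
    "int (A (False, False)) - int (A (False, True)) + int (A (True, False)) - int (A (True, True))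
      = int (B (False, False)) - int (B (False, True)) + int (B (True, False)) - int (B (True, True))"
    "int (A (False, False)) + int (A (False, True)) - int (A (True, False)) - int (A (True, True))
      = int (B (False, False)) + int (B (False, True)) - int (B (True, False)) - int (B (True, True))"
    "int (A (False, False)) - int (A (False, True)) - int (A (True, False)) + int (A (True, True))
      = int (B (False, False)) - int (B (False, True)) - int (B (True, False)) + int (B (True, True))"
    by (simp_all add: char_sum_def sum_UNIV_cls chi_def algebra_simps)
  obtain a b where k: "k = (a, b)" by fastforce
  show ?thesis unfolding k using eqs by (cases a; cases b) simp_all
qed

lemma orbit_comb_eq_if_char_sums_eq:
  assumes "\<And>j. j \<noteq> (False, False) \<Longrightarrow> char_sum j A = char_sum j B"
  shows "orbit_comb A y = orbit_comb B y"
proof -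
  define m where "m = int (A (False, False)) - int (B (False, False))"
  have m: "int (A k) = int (B k) + m" for k
    unfolding m_def by (rule char_sums_eq_imp_diff_const[OF assms])
  have "int (A k + nat (- m)) = int (B k + nat m)" for k
    using m[of k] by simp
  then have "(\<lambda>k. A k + nat (- m)) = (\<lambda>k. B k + nat m)"
    by (simp only: of_nat_eq_iff)
  then show ?thesis by (metis orbit_comb_shift)
qed

lemma Sigma234_imp_derivable:
  assumes "(s, t) \<in> Sigma234"
  shows "derivable B234 s t"
proof -
  have sat: "eval (op_of j) \<rho> s = eval (op_of j) \<rho> t" if "j \<noteq> (False, False)" for j \<rho>
  proof -
    have "satisfies (op_of j) (s, t)"
      using assms that by (simp add: Sigma234_eq del: split_paired_All)
    then show ?thesis by (simp add: satisfies_def)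
  qed
  have occ_eq: "orbit_comb (occ s x) (fvar x) = orbit_comb (occ t x) (fvar x)" for x
  proof (rule orbit_comb_eq_if_char_sums_eq)
    fix j :: cls
    assume "j \<noteq> (False, False)"
    from sat[OF this, of "\<lambda>n. of_bool (n = x)"]
    show "char_sum j (occ s x) = char_sum j (occ t x)" by (simp only: eval_op_of_indicator)
  qed
  have inner_eq: "orbit_comb (inner s) \<gamma> = orbit_comb (inner t) \<gamma>"
  proof (rule orbit_comb_eq_if_char_sums_eq)
    fix j :: cls
    assume j: "j \<noteq> (False, False)"
    have "chi j (True, False) + chi j (False, True) - 1 \<noteq> 0"
      by (auto simp: chi_def)
    with sat[OF j, of "\<lambda>_. 1"]
    show "char_sum j (inner s) = char_sum j (inner t)" by (simp add: eval_op_of_one)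
  qed
  let ?V = "vars s \<union> vars t"
  have "abs_free s = (\<Sum>x\<in>?V. orbit_comb (occ s x) (fvar x)) + orbit_comb (inner s) \<gamma>"
    by (rule abs_free_orbit_combs) (simp_all add: finite_vars)
  also have "\<dots> = (\<Sum>x\<in>?V. orbit_comb (occ t x) (fvar x)) + orbit_comb (inner t) \<gamma>"
    by (simp only: occ_eq inner_eq)
  also have "\<dots> = abs_free t"
    by (rule abs_free_orbit_combs[symmetric]) (simp_all add: finite_vars)
  finally show ?thesis by (simp add: free.abs_eq_iff)
qed

theorem theorem7p1:
  shows "is_basis_of B234 Sigma234"
  unfolding is_basis_of_def consequences_def
  using derivable_imp_Sigma234 Sigma234_imp_derivable by auto

end
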